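(* Let $\mathfrak{R}$ be a $3$-torsion free prime alternative ring containing a nontrivial idempotent $e_1$. Then every multiplicative Lie $3$-derivation $\mathcal{D}$ of $\mathfrak{R}$ is almost additive, i.e. $\mathcal{D}(a+b)-\mathcal{D}(a)-\mathcal{D}(b)\in\mathcal{Z}(\mathfrak{R})$ for all $a,b\in\mathfrak{R}$.
   Context: Rings are not assumed associative or unital. $\mathfrak{R}$ is alternative if $(x,x,y)=0=(y,x,x)$ for all $x,y$, where $(x,y,z)=(xy)z-x(yz)$; it is $3$-torsion free if $3x=0$ implies $x=0$; it is prime if $\mathfrak{A}\mathfrak{B}\ne0$ for any two nonzero ideals $\mathfrak{A},\mathfrak{B}$. $[x,y]=xy-yx$; $\mathcal{Z}(\mathfrak{R})=\{r: [r,x]=0\ \forall x\in\mathfrak{R}\}$. A map $\mathcal{D}\colon\mathfrak{R}\to\mathfrak{R}$, not necessarily additive, is a multiplicative Lie $3$-derivation if $\mathcal{D}([[x,y],w])=[[\mathcal{D}(x),y],w]+[[x,\mathcal{D}(y)],w]+[[x,y],\mathcal{D}(w)]$ for all $x,y,w\in\mathfrak{R}$. A nontrivial idempotent is $e_1\ne0$ with $e_1^2=e_1$ which is not a multiplicative identity. *)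

theory Defs
  imports Main
begin

definition nonassoc_ring :: "'a::{ab_group_add,times} itself \<Rightarrow> bool" where
  "nonassoc_ring _ \<longleftrightarrow>
     (\<forall>x y z::'a. x * (y + z) = x * y + x * z) \<and>
     (\<forall>x y z::'a. (x + y) * z = x * z + y * z)"

definition assoc :: "'a::{minus,times} \<Rightarrow> 'a \<Rightarrow> 'a \<Rightarrow> 'a" where
  "assoc x y z = (x * y) * z - x * (y * z)"

definition alternative :: "'a::{ab_group_add,times} itself \<Rightarrow> bool" where
  "alternative _ \<longleftrightarrow> (\<forall>x y::'a. assoc x x y = 0 \<and> assoc y x x = 0)"

definition three_torsion_free :: "'a::ab_group_add itself \<Rightarrow> bool" where
  "three_torsion_free _ \<longleftrightarrow> (\<forall>x::'a. x + x + x = 0 \<longrightarrow> x = 0)"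

definition ring_ideal :: "'a::{ab_group_add,times} set \<Rightarrow> bool" where
  "ring_ideal I \<longleftrightarrow> 0 \<in> I \<and> (\<forall>a\<in>I. \<forall>b\<in>I. a - b \<in> I) \<and>
     (\<forall>a\<in>I. \<forall>r. r * a \<in> I \<and> a * r \<in> I)"

text \<open>Prime: AB \<noteq> 0 for nonzero ideals A, B.  The product AB is the additive
subgroup generated by all products ab, so AB \<noteq> 0 iff some ab \<noteq> 0.\<close>
definition prime_ring :: "'a::{ab_group_add,times} itself \<Rightarrow> bool" where
  "prime_ring _ \<longleftrightarrow> (\<forall>A B :: 'a set. ring_ideal A \<and> ring_ideal B \<and> A \<noteq> {0} \<and> B \<noteq> {0}
      \<longrightarrow> (\<exists>a\<in>A. \<exists>b\<in>B. a * b \<noteq> 0))"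

definition commutator :: "'a::{minus,times} \<Rightarrow> 'a \<Rightarrow> 'a" where
  "commutator x y = x * y - y * x"

definition center :: "'a::{ab_group_add,times} set" where
  "center = {r. \<forall>x. commutator r x = 0}"

definition mult_lie_3_derivation :: "('a::{ab_group_add,times} \<Rightarrow> 'a) \<Rightarrow> bool" where
  "mult_lie_3_derivation D \<longleftrightarrow> (\<forall>x y w.
     D (commutator (commutator x y) w) =
       commutator (commutator (D x) y) w + commutator (commutator x (D y)) w
       + commutator (commutator x y) (D w))"

end

theory Submission
  imports Defs
begin

(* Write defect u v = D (u + v) - D u - D v. Applying the Lie 3-derivation identity to u + v, u and v
   shows that double commutators pass through the defect: [[defect u v, x], y] is the defect of
   [[u, x], y] and [[v, x], y], and likewise in the last slot. In the Peirce decomposition with respect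
   to e, [[t, e], e] is the off-diagonal part of t. Evaluating D on [[e + p, e + q], e] shows that D is
   additive on the off-diagonal part R12 + R21, so every defect lies in R11 + R22 and commutes with R12
   and R21. Its commutator with an element of R11 (resp. R22) then annihilates R12 and R21; such
   elements form an ideal with a nonzero annihilator (an off-diagonal part of an element not fixed by
   e, resp. e itself). *)

locale nonassociative_ring =
  fixes R :: "'a::{ab_group_add,times} itself"
  assumes nonassoc: "nonassoc_ring R"
begin

lemma distrib_left [simp]: "(x::'a) * (y + z) = x * y + x * z"
  using nonassoc by (simp add: nonassoc_ring_def)

lemma distrib_right [simp]: "((x::'a) + y) * z = x * z + y * z"
  using nonassoc by (simp add: nonassoc_ring_def)

lemma mult_zero_left [simp]: "0 * (x::'a) = 0"
  using distrib_right[of 0 0 x] by simp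

lemma mult_zero_right [simp]: "(x::'a) * 0 = 0"
  using distrib_left[of x 0 0] by simp

lemma mult_minus_left [simp]: "- (x::'a) * y = - (x * y)"
  using distrib_right[of "- x" x y] by (simp add: eq_neg_iff_add_eq_0)

lemma mult_minus_right [simp]: "(x::'a) * - y = - (x * y)"
  using distrib_left[of x "- y" y] by (simp add: eq_neg_iff_add_eq_0)

lemma left_diff_distrib [simp]: "((x::'a) - y) * z = x * z - y * z"
  using distrib_right[of x "- y" z] by simp

lemma right_diff_distrib [simp]: "(x::'a) * (y - z) = x * y - x * z"
  using distrib_left[of x y "- z"] by simp

lemma mult_reassoc: "((x::'a) * y) * z = x * (y * z) + assoc x y z"
  by (simp add: assoc_def)

lemma assoc_add_left: "assoc ((x::'a) + y) z w = assoc x z w + assoc y z w"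
  by (simp add: assoc_def algebra_simps)

lemma assoc_add_middle: "assoc (z::'a) (x + y) w = assoc z x w + assoc z y w"
  by (simp add: assoc_def algebra_simps)

lemma assoc_add_right: "assoc (z::'a) w (x + y) = assoc z w x + assoc z w y"
  by (simp add: assoc_def algebra_simps)

lemma teichmueller_identity:
  "assoc ((a::'a) * b) c d - assoc a (b * c) d + assoc a b (c * d)
     = a * assoc b c d + assoc a b c * d"
  by (simp add: assoc_def algebra_simps)

lemma commutator_add_left [simp]: "commutator ((x::'a) + y) z = commutator x z + commutator y z"
  by (simp add: commutator_def algebra_simps)

lemma commutator_add_right [simp]: "commutator (z::'a) (x + y) = commutator z x + commutator z y"
  by (simp add: commutator_def algebra_simps)

lemma commutator_minus_left [simp]: "commutator (- (x::'a)) z = - commutator x z"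
  by (simp add: commutator_def algebra_simps)

lemma commutator_minus_right [simp]: "commutator (z::'a) (- x) = - commutator z x"
  by (simp add: commutator_def algebra_simps)

lemma commutator_diff_left [simp]: "commutator ((x::'a) - y) z = commutator x z - commutator y z"
  by (simp add: commutator_def algebra_simps)

lemma commutator_diff_right [simp]: "commutator (z::'a) (x - y) = commutator z x - commutator z y"
  by (simp add: commutator_def algebra_simps)

lemma commutator_zero [simp]:
  "commutator (0::'a) z = 0" "commutator z (0::'a) = 0" "commutator (z::'a) z = 0"
  by (simp_all add: commutator_def)

lemma commutator_swap: "commutator (x::'a) y = - commutator y x"
  by (simp add: commutator_def)

end

definition annihilator :: "'a::{ab_group_add,times} set \<Rightarrow> 'a set" where
  "annihilator I = {x. \<forall>k\<in>I. k * x = 0 \<and> x * k = 0}"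

locale alternative_ring = nonassociative_ring +
  assumes alt: "alternative R"
begin

lemma assoc_left_alternative: "assoc (x::'a) x y = 0"
  using alt by (simp add: alternative_def)

lemma assoc_right_alternative: "assoc (y::'a) x x = 0"
  using alt by (simp add: alternative_def)

lemma assoc_swap_left: "assoc (x::'a) y z = - assoc y x z"
proof -
  have "assoc (x + y) (x + y) z = assoc x x z + assoc y x z + (assoc x y z + assoc y y z)"
    by (simp only: assoc_add_left assoc_add_middle)
  thus ?thesis by (simp add: assoc_left_alternative eq_neg_iff_add_eq_0 add.commute)
qed

lemma assoc_swap_right: "assoc (x::'a) y z = - assoc x z y"
proof -
  have "assoc x (y + z) (y + z) = assoc x y y + assoc x z y + (assoc x y z + assoc x z z)"
    by (simp only: assoc_add_middle assoc_add_right)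
  thus ?thesis by (simp add: assoc_right_alternative eq_neg_iff_add_eq_0 add.commute)
qed

lemma assoc_cycle: "assoc (x::'a) y z = assoc y z x"
  using assoc_swap_left[of x y z] assoc_swap_right[of y x z] by simp

lemma assoc_flexible: "assoc (x::'a) y x = 0"
  using assoc_swap_left[of x y x] assoc_right_alternative[of y x] by simp

lemma assoc_zero_permute:
  assumes "assoc (x::'a) y z = 0"
  shows "assoc y z x = 0" "assoc z x y = 0" "assoc y x z = 0" "assoc x z y = 0" "assoc z y x = 0"
  using assms assoc_cycle[of x y z] assoc_cycle[of y z x] assoc_swap_left[of x y z]
    assoc_swap_right[of x y z] assoc_swap_left[of z y x] assoc_cycle[of z y x]
  by simp_all

lemma assoc_middle_mult:
  fixes x y z :: 'a
  shows assoc_middle_left_mult: "assoc x (x * y) z = assoc x y z * x"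
    and assoc_middle_right_mult: "assoc x (y * x) z = x * assoc x y z"
proof -
  define S where "S = assoc (x * x) y z"
  define F where "F = assoc x (x * y) z"
  define G where "G = assoc x (y * x) z"
  define F' where "F' = assoc x (x * z) y"
  define a where "a = assoc x y z"
  \<comment> \<open>Teichmueller's identity at (x,x,y,z), (x,x,z,y), (z,y,x,x) and (x,y,x,z) gives
     a linear system in S, F, G and F'.\<close>
  have "S - F = x * a"
    using teichmueller_identity[of x x y z] assoc_left_alternative[of x y]
      assoc_left_alternative[of x "y * z"]
    by (simp add: S_def F_def a_def)
  moreover have "- S - F' = - (x * a)"
    using teichmueller_identity[of x x z y] assoc_left_alternative[of x z]
      assoc_left_alternative[of x "z * y"] assoc_swap_right[of "x * x" y z] assoc_swap_right[of x y z]
    by (simp add: S_def F'_def a_def)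
  moreover have "G - S = - (a * x)"
  proof -
    have "- assoc z (y * x) x + assoc z y (x * x) = assoc z y x * x"
      using teichmueller_identity[of z y x x] assoc_right_alternative[of "z * y" x]
        assoc_right_alternative[of y x]
      by simp
    moreover have "assoc z (y * x) x = - G"
      using assoc_cycle[of z "y * x" x] assoc_cycle[of "y * x" x z] assoc_swap_right[of x z "y * x"]
      by (simp add: G_def)
    moreover have "assoc z y (x * x) = - S"
      using assoc_cycle[of z y "x * x"] assoc_swap_left[of y "x * x" z] by (simp add: S_def)
    moreover have "assoc z y x = - a"
      using assoc_cycle[of z y x] assoc_swap_left[of y x z] by (simp add: a_def)
    ultimately show ?thesis by (simp add: algebra_simps)
  qed
  moreover have "- F - G - F' = - (x * a)"
    using teichmueller_identity[of x y x z] assoc_flexible[of x y]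
      assoc_swap_left[of "x * y" x z] assoc_swap_right[of x y "x * z"] assoc_swap_left[of y x z]
    by (simp add: F_def G_def F'_def a_def)
  ultimately have "G = x * a" and "F = a * x"
    by (simp_all add: algebra_simps)
  thus "assoc x (x * y) z = assoc x y z * x" and "assoc x (y * x) z = x * assoc x y z"
    by (simp_all add: F_def G_def a_def)
qed

lemma moufang_left: "(((x::'a) * a) * x) * y = x * (a * (x * y))"
proof -
  have "((x * a) * x) * y = (x * a) * (x * y) + assoc (x * a) x y" by (rule mult_reassoc)
  also have "(x * a) * (x * y) = x * (a * (x * y)) + assoc x a (x * y)" by (rule mult_reassoc)
  also have "assoc (x * a) x y = - (assoc x a y * x)"
    using assoc_swap_left[of "x * a" x y] assoc_middle_left_mult[of x a y] by simp
  also have "assoc x a (x * y) = assoc x a y * x"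
    using assoc_swap_right[of x a "x * y"] assoc_middle_left_mult[of x y a] assoc_swap_right[of x y a]
    by simp
  finally show ?thesis by simp
qed

lemma moufang_middle: "((x::'a) * a) * (y * x) = (x * (a * y)) * x"
proof -
  have "((x * a) * y) * x = (x * a) * (y * x) + assoc (x * a) y x" by (rule mult_reassoc)
  moreover have "(x * a) * y = x * (a * y) + assoc x a y" by (rule mult_reassoc)
  moreover have "assoc (x * a) y x = assoc x a y * x"
    using assoc_cycle[of "x * a" y x] assoc_cycle[of y x "x * a"] assoc_middle_left_mult[of x a y]
    by simp
  ultimately show ?thesis by (simp add: algebra_simps)
qed

lemma moufang_right: "(y::'a) * ((x * a) * x) = ((y * x) * a) * x"
proof -
  have "((y * x) * a) * x = (y * x) * (a * x) + assoc (y * x) a x" by (rule mult_reassoc)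
  also have "(y * x) * (a * x) = y * (x * (a * x)) + assoc y x (a * x)" by (rule mult_reassoc)
  also have "assoc (y * x) a x = x * assoc x y a"
    using assoc_cycle[of "y * x" a x] assoc_cycle[of a x "y * x"] assoc_middle_right_mult[of x y a]
    by simp
  also have "assoc y x (a * x) = - (x * assoc x y a)"
    using assoc_cycle[of y x "a * x"] assoc_middle_right_mult[of x a y] assoc_swap_right[of x a y]
    by simp
  finally show ?thesis using assoc_flexible[of x a] by (simp add: assoc_def)
qed

lemma ring_ideal_annihilator:
  fixes I :: "'a set"
  assumes I: "ring_ideal I"
  shows "ring_ideal (annihilator I)"
proof -
  have "k * (r * x) = 0 \<and> (r * x) * k = 0 \<and> k * (x * r) = 0 \<and> (x * r) * k = 0"
    if x: "x \<in> annihilator I" and k: "k \<in> I" for x k r :: 'a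
  proof -
    have "r * k \<in> I" "k * r \<in> I" using I k by (simp_all add: ring_ideal_def)
    hence xk: "k * x = 0" "x * k = 0" "(r * k) * x = 0" "x * (r * k) = 0" "(k * r) * x = 0"
      "x * (k * r) = 0"
      using x k by (auto simp: annihilator_def)
    have "assoc r x k = 0" using assoc_swap_right[of r x k] xk by (simp add: assoc_def)
    moreover have "assoc x r k = 0" using assoc_cycle[of x r k] xk by (simp add: assoc_def)
    ultimately have "assoc k r x = 0" "assoc k x r = 0"
      using assoc_cycle[of k r x] assoc_swap_right[of k x r] by simp_all
    with \<open>assoc r x k = 0\<close> \<open>assoc x r k = 0\<close> show ?thesis
      using mult_reassoc[of r x k] mult_reassoc[of k r x] mult_reassoc[of x r k]
        mult_reassoc[of k x r] xk
      by simp
  qed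
  thus ?thesis by (auto simp: ring_ideal_def annihilator_def)
qed

lemma ideal_zero_of_nonzero_annihilator:
  fixes I :: "'a set"
  assumes "prime_ring R" "ring_ideal I" "j \<in> annihilator I" "j \<noteq> 0" "k \<in> I"
  shows "k = 0"
proof -
  have "I \<noteq> {0} \<longrightarrow> (\<exists>a\<in>I. \<exists>b\<in>annihilator I. a * b \<noteq> 0)"
    using assms(1,2) ring_ideal_annihilator[OF assms(2)] assms(3,4)
    unfolding prime_ring_def by blast
  thus ?thesis using assms(5) by (auto simp: annihilator_def)
qed

end

locale peirce_decomposition = alternative_ring R for R :: "'a::{ab_group_add,times} itself" +
  fixes e :: 'a
  assumes idem: "e * e = e"
begin

lemma idem_mult_left [simp]: "e * (e * z) = e * z"
  using assoc_left_alternative[of e z] idem by (simp add: assoc_def)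

lemma idem_mult_right [simp]: "(z * e) * e = z * e"
  using assoc_right_alternative[of z e] idem by (simp add: assoc_def)

lemma idem_flexible: "(e * z) * e = e * (z * e)"
  using assoc_flexible[of e z] by (simp add: assoc_def)

lemma idem_mult_left_expand: "e * (x * y) = (e * x) * y + (x * e) * y - x * (e * y)"
  using assoc_swap_left[of e x y] by (simp add: assoc_def algebra_simps)

lemma idem_mult_right_expand: "(x * y) * e = x * (y * e) - (x * e) * y + x * (e * y)"
  using assoc_swap_right[of x e y] by (simp add: assoc_def algebra_simps)

definition R11 :: "'a set" where "R11 = {x. e * x = x \<and> x * e = x}"
definition R12 :: "'a set" where "R12 = {x. e * x = x \<and> x * e = 0}"
definition R21 :: "'a set" where "R21 = {x. e * x = 0 \<and> x * e = x}"
definition R22 :: "'a set" where "R22 = {x. e * x = 0 \<and> x * e = 0}"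

lemma mem_R11_iff [simp]: "x \<in> R11 \<longleftrightarrow> e * x = x \<and> x * e = x" by (simp add: R11_def)
lemma mem_R12_iff [simp]: "x \<in> R12 \<longleftrightarrow> e * x = x \<and> x * e = 0" by (simp add: R12_def)
lemma mem_R21_iff [simp]: "x \<in> R21 \<longleftrightarrow> e * x = 0 \<and> x * e = x" by (simp add: R21_def)
lemma mem_R22_iff [simp]: "x \<in> R22 \<longleftrightarrow> e * x = 0 \<and> x * e = 0" by (simp add: R22_def)

\<comment> \<open>p_ij x stands for e_i x e_j with e_1 = e and the formal complement e_2 = 1 - e, since the
   ring need not have a unit.\<close>
definition p11 :: "'a \<Rightarrow> 'a" where "p11 x = (e * x) * e"
definition p12 :: "'a \<Rightarrow> 'a" where "p12 x = e * x - (e * x) * e"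
definition p21 :: "'a \<Rightarrow> 'a" where "p21 x = x * e - (e * x) * e"
definition p22 :: "'a \<Rightarrow> 'a" where "p22 x = x - e * x - x * e + (e * x) * e"

lemma peirce_decomp: "x = p11 x + p12 x + p21 x + p22 x"
  by (simp add: p11_def p12_def p21_def p22_def)

lemma p11_in_R11: "p11 x \<in> R11" by (simp add: p11_def idem_flexible idem)
lemma p12_in_R12: "p12 x \<in> R12" by (simp add: p12_def idem_flexible)
lemma p21_in_R21: "p21 x \<in> R21" by (simp add: p21_def idem_flexible)
lemma p22_in_R22: "p22 x \<in> R22" by (simp add: p22_def idem_flexible)

lemma peirce_proj_add [simp]:
  "p11 (x + y) = p11 x + p11 y" "p12 (x + y) = p12 x + p12 y"
  "p21 (x + y) = p21 x + p21 y" "p22 (x + y) = p22 x + p22 y"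
  by (simp_all add: p11_def p12_def p21_def p22_def algebra_simps)

lemma peirce_proj_zero [simp]: "p11 0 = 0" "p12 0 = 0" "p21 0 = 0" "p22 0 = 0"
  by (simp_all add: p11_def p12_def p21_def p22_def)

lemma peirce_proj_of_R11: "x \<in> R11 \<Longrightarrow> p11 x = x \<and> p12 x = 0 \<and> p21 x = 0 \<and> p22 x = 0"
  by (simp add: p11_def p12_def p21_def p22_def)
lemma peirce_proj_of_R12: "x \<in> R12 \<Longrightarrow> p11 x = 0 \<and> p12 x = x \<and> p21 x = 0 \<and> p22 x = 0"
  by (simp add: p11_def p12_def p21_def p22_def)
lemma peirce_proj_of_R21: "x \<in> R21 \<Longrightarrow> p11 x = 0 \<and> p12 x = 0 \<and> p21 x = x \<and> p22 x = 0"
  by (simp add: p11_def p12_def p21_def p22_def)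
lemma peirce_proj_of_R22: "x \<in> R22 \<Longrightarrow> p11 x = 0 \<and> p12 x = 0 \<and> p21 x = 0 \<and> p22 x = x"
  by (simp add: p11_def p12_def p21_def p22_def)

lemma mult_R11_R11: "x \<in> R11 \<Longrightarrow> y \<in> R11 \<Longrightarrow> x * y \<in> R11"
  and mult_R11_R12: "x \<in> R11 \<Longrightarrow> y \<in> R12 \<Longrightarrow> x * y \<in> R12"
  and mult_R12_R21: "x \<in> R12 \<Longrightarrow> y \<in> R21 \<Longrightarrow> x * y \<in> R11"
  and mult_R12_R22: "x \<in> R12 \<Longrightarrow> y \<in> R22 \<Longrightarrow> x * y \<in> R12"
  and mult_R12_R12: "x \<in> R12 \<Longrightarrow> y \<in> R12 \<Longrightarrow> x * y \<in> R21"
  and mult_R21_R11: "x \<in> R21 \<Longrightarrow> y \<in> R11 \<Longrightarrow> x * y \<in> R21"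
  and mult_R21_R12: "x \<in> R21 \<Longrightarrow> y \<in> R12 \<Longrightarrow> x * y \<in> R22"
  and mult_R21_R21: "x \<in> R21 \<Longrightarrow> y \<in> R21 \<Longrightarrow> x * y \<in> R12"
  and mult_R22_R21: "x \<in> R22 \<Longrightarrow> y \<in> R21 \<Longrightarrow> x * y \<in> R21"
  and mult_R22_R22: "x \<in> R22 \<Longrightarrow> y \<in> R22 \<Longrightarrow> x * y \<in> R22"
  by (simp_all add: idem_mult_left_expand[of x y] idem_mult_right_expand[of x y])

lemma mult_R11_zero: "x \<in> R11 \<Longrightarrow> e * y = 0 \<Longrightarrow> x * y = 0"
  using moufang_left[of e x y] by (simp add: idem_flexible)

lemma mult_zero_R11: "y \<in> R11 \<Longrightarrow> x * e = 0 \<Longrightarrow> x * y = 0"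
  using moufang_right[of x e y] by (simp add: idem_flexible)

lemma mult_R11_R21_zero: "x \<in> R11 \<Longrightarrow> y \<in> R21 \<Longrightarrow> x * y = 0"
  by (rule mult_R11_zero) simp_all

lemma mult_R11_R22_zero: "x \<in> R11 \<Longrightarrow> y \<in> R22 \<Longrightarrow> x * y = 0"
  by (rule mult_R11_zero) simp_all

lemma mult_R12_R11_zero: "x \<in> R12 \<Longrightarrow> y \<in> R11 \<Longrightarrow> x * y = 0"
  by (rule mult_zero_R11) simp_all

lemma mult_R22_R11_zero: "x \<in> R22 \<Longrightarrow> y \<in> R11 \<Longrightarrow> x * y = 0"
  by (rule mult_zero_R11) simp_all

lemma mult_R22_R12_zero:
  assumes "x \<in> R22" "y \<in> R12"
  shows "x * y = 0"
proof -
  have "e * (x * y) = - (x * y)" "(x * y) * e = x * y"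
    using assms by (simp_all add: idem_mult_left_expand[of x y] idem_mult_right_expand[of x y])
  moreover have "(e * x) * (y * e) = (e * (x * y)) * e" by (rule moufang_middle)
  ultimately show ?thesis using assms by simp
qed

lemma mult_R21_R22_zero:
  assumes "x \<in> R21" "y \<in> R22"
  shows "x * y = 0"
proof -
  have "e * (x * y) = x * y" "(x * y) * e = - (x * y)"
    using assms by (simp_all add: idem_mult_left_expand[of x y] idem_mult_right_expand[of x y])
  moreover have "(e * x) * (y * e) = (e * (x * y)) * e" by (rule moufang_middle)
  ultimately show ?thesis using assms by simp
qed

definition diagonal :: "'a set" where "diagonal = {t. p12 t = 0 \<and> p21 t = 0}"

lemma commutator_e: "commutator t e = p21 t - p12 t"
  by (simp add: commutator_def p21_def p12_def)

lemma commutator_e_R12: "c \<in> R12 \<Longrightarrow> commutator e c = c \<and> commutator c e = - c"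
  by (simp add: commutator_def)

lemma commutator_e_R21: "c \<in> R21 \<Longrightarrow> commutator e c = - c \<and> commutator c e = c"
  by (simp add: commutator_def)

lemma commutator2_e: "commutator (commutator t e) e = p12 t + p21 t"
  using commutator_e_R12[OF p12_in_R12[of t]] commutator_e_R21[OF p21_in_R21[of t]]
  by (simp add: commutator_e[of t])

lemma diagonal_iff: "t \<in> diagonal \<longleftrightarrow> commutator (commutator t e) e = 0"
proof
  assume "commutator (commutator t e) e = 0"
  hence "p12 t + p21 t = 0" by (simp add: commutator2_e)
  hence "p12 (p12 t + p21 t) = 0" "p21 (p12 t + p21 t) = 0" by simp_all
  thus "t \<in> diagonal"
    using peirce_proj_of_R12[OF p12_in_R12[of t]] peirce_proj_of_R21[OF p21_in_R21[of t]]
    by (simp add: diagonal_def)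
qed (simp add: diagonal_def commutator2_e)

lemma diagonal_minus: "t \<in> diagonal \<Longrightarrow> - t \<in> diagonal"
  by (simp add: diagonal_def p12_def p21_def)

lemma diagonal_commutator_e: "t \<in> diagonal \<Longrightarrow> commutator t e = 0"
  by (simp add: diagonal_def commutator_e)

lemma commutator_e_diagonal: "t \<in> diagonal \<Longrightarrow> commutator e t = 0"
  using diagonal_commutator_e commutator_swap by (metis neg_equal_0_iff_equal)

lemma diagonal_split: "t \<in> diagonal \<Longrightarrow> t = p11 t + p22 t"
  using peirce_decomp[of t] by (simp add: diagonal_def)

lemma R12_diagonal_zero: "x \<in> R12 \<Longrightarrow> x \<in> diagonal \<Longrightarrow> x = 0"
  using peirce_proj_of_R12[of x] by (simp add: diagonal_def)

lemma R21_diagonal_zero: "x \<in> R21 \<Longrightarrow> x \<in> diagonal \<Longrightarrow> x = 0"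
  using peirce_proj_of_R21[of x] by (simp add: diagonal_def)

lemma R11_add_R22_diagonal: "a \<in> R11 \<Longrightarrow> b \<in> R22 \<Longrightarrow> a + b \<in> diagonal"
  using peirce_proj_of_R11[of a] peirce_proj_of_R22[of b] by (simp add: diagonal_def)

lemma commutator_R12_R21_diagonal: "b \<in> R12 \<Longrightarrow> c \<in> R21 \<Longrightarrow> commutator b c \<in> diagonal"
  using R11_add_R22_diagonal[OF mult_R12_R21, of b c "- (c * b)"] mult_R21_R12[of c b]
  by (simp add: commutator_def)

lemma commutator_R21_R12_diagonal: "b \<in> R21 \<Longrightarrow> c \<in> R12 \<Longrightarrow> commutator b c \<in> diagonal"
  using diagonal_minus[OF commutator_R12_R21_diagonal, of c b] commutator_swap[of b c] by simp

lemma commutator_R12_R12: "b \<in> R12 \<Longrightarrow> c \<in> R12 \<Longrightarrow> commutator b c \<in> R21"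
  using mult_R12_R12[of b c] mult_R12_R12[of c b] by (simp add: commutator_def)

lemma commutator_R21_R21: "b \<in> R21 \<Longrightarrow> c \<in> R21 \<Longrightarrow> commutator b c \<in> R12"
  using mult_R21_R21[of b c] mult_R21_R21[of c b] by (simp add: commutator_def)

lemma commutator_diagonal:
  assumes "t \<in> diagonal"
  shows commutator_diagonal_R11: "c \<in> R11 \<Longrightarrow> commutator t c \<in> R11"
    and commutator_diagonal_R12: "c \<in> R12 \<Longrightarrow> commutator t c \<in> R12"
    and commutator_diagonal_R21: "c \<in> R21 \<Longrightarrow> commutator t c \<in> R21"
    and commutator_diagonal_R22: "c \<in> R22 \<Longrightarrow> commutator t c \<in> R22"
proof -
  define a b where "a = p11 t" and "b = p22 t"
  have a: "a \<in> R11" and b: "b \<in> R22" unfolding a_def b_def by (rule p11_in_R11 p22_in_R22)+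
  have "t = a + b" unfolding a_def b_def by (rule diagonal_split[OF assms])
  hence t: "commutator t c = (a * c - c * a) + (b * c - c * b)" for c
    by (simp add: commutator_def)
  show "c \<in> R11 \<Longrightarrow> commutator t c \<in> R11"
    using mult_R11_R11[OF a] mult_R11_R11[OF _ a] mult_R22_R11_zero[OF b] mult_R11_R22_zero[OF _ b]
    by (simp add: t)
  show "c \<in> R12 \<Longrightarrow> commutator t c \<in> R12"
    using mult_R11_R12[OF a] mult_R12_R22[OF _ b] mult_R22_R12_zero[OF b] mult_R12_R11_zero[OF _ a]
    by (simp add: t)
  show "c \<in> R21 \<Longrightarrow> commutator t c \<in> R21"
    using mult_R22_R21[OF b] mult_R21_R11[OF _ a] mult_R11_R21_zero[OF a] mult_R21_R22_zero[OF _ b]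
    by (simp add: t)
  show "c \<in> R22 \<Longrightarrow> commutator t c \<in> R22"
    using mult_R22_R22[OF b] mult_R22_R22[OF _ b] mult_R11_R22_zero[OF a] mult_R22_R11_zero[OF _ a]
    by (simp add: t)
qed

definition Ann11 :: "'a set" where
  "Ann11 = {k \<in> R11. (\<forall>c\<in>R12. k * c = 0) \<and> (\<forall>c\<in>R21. c * k = 0)}"

definition Ann22 :: "'a set" where
  "Ann22 = {k \<in> R22. (\<forall>c\<in>R12. c * k = 0) \<and> (\<forall>c\<in>R21. k * c = 0)}"

lemma Ann11_mult_R11:
  assumes k: "k \<in> Ann11" and r: "r \<in> R11"
  shows "r * k \<in> Ann11" "k * r \<in> Ann11"
proof -
  have k11: "k \<in> R11"
    and kc: "\<And>c. c \<in> R12 \<Longrightarrow> k * c = 0"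
    and ck: "\<And>c. c \<in> R21 \<Longrightarrow> c * k = 0"
    using k by (auto simp: Ann11_def)
  have "assoc k c r = 0" if "c \<in> R12" for c
    using kc[OF that] mult_R12_R11_zero[OF that r] by (simp add: assoc_def)
  note assoc_R12 = this assoc_zero_permute[OF this]
  have "assoc k c r = 0" if "c \<in> R21" for c
    using mult_R11_R21_zero[OF k11 that] mult_R11_R21_zero[OF k11 mult_R21_R11[OF that r]]
    by (simp add: assoc_def)
  note assoc_R21 = this assoc_zero_permute[OF this]
  have "(r * k) * c = 0 \<and> (k * r) * c = 0" if "c \<in> R12" for c
    using assoc_R12[OF that] mult_reassoc[of r k c] mult_reassoc[of k r c] kc[OF that]
      kc[OF mult_R11_R12[OF r that]]
    by simp
  moreover have "c * (r * k) = 0 \<and> c * (k * r) = 0" if "c \<in> R21" for c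
    using assoc_R21[OF that] mult_reassoc[of c r k] mult_reassoc[of c k r] ck[OF that]
      ck[OF mult_R21_R11[OF that r]]
    by (simp add: algebra_simps)
  ultimately show "r * k \<in> Ann11" "k * r \<in> Ann11"
    using mult_R11_R11[OF r k11] mult_R11_R11[OF k11 r] by (simp_all add: Ann11_def)
qed

lemma Ann22_mult_R22:
  assumes k: "k \<in> Ann22" and r: "r \<in> R22"
  shows "r * k \<in> Ann22" "k * r \<in> Ann22"
proof -
  have k22: "k \<in> R22"
    and ck: "\<And>c. c \<in> R12 \<Longrightarrow> c * k = 0"
    and kc: "\<And>c. c \<in> R21 \<Longrightarrow> k * c = 0"
    using k by (auto simp: Ann22_def)
  have "assoc k c r = 0" if "c \<in> R12" for c
    using mult_R22_R12_zero[OF k22 that] mult_R22_R12_zero[OF k22 mult_R12_R22[OF that r]]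
    by (simp add: assoc_def)
  note assoc_R12 = this assoc_zero_permute[OF this]
  have "assoc k c r = 0" if "c \<in> R21" for c
    using kc[OF that] mult_R21_R22_zero[OF that r] by (simp add: assoc_def)
  note assoc_R21 = this assoc_zero_permute[OF this]
  have "c * (r * k) = 0 \<and> c * (k * r) = 0" if "c \<in> R12" for c
    using assoc_R12[OF that] mult_reassoc[of c r k] mult_reassoc[of c k r] ck[OF that]
      ck[OF mult_R12_R22[OF that r]]
    by (simp add: algebra_simps)
  moreover have "(r * k) * c = 0 \<and> (k * r) * c = 0" if "c \<in> R21" for c
    using assoc_R21[OF that] mult_reassoc[of r k c] mult_reassoc[of k r c] kc[OF that]
      kc[OF mult_R22_R21[OF r that]]
    by simp
  ultimately show "r * k \<in> Ann22" "k * r \<in> Ann22"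
    using mult_R22_R22[OF r k22] mult_R22_R22[OF k22 r] by (simp_all add: Ann22_def)
qed

lemma ring_ideal_Ann11: "ring_ideal Ann11"
proof -
  have "r * k \<in> Ann11 \<and> k * r \<in> Ann11" if k: "k \<in> Ann11" for k r
  proof -
    have k11: "k \<in> R11"
      and kc: "\<And>c. c \<in> R12 \<Longrightarrow> k * c = 0"
      and ck: "\<And>c. c \<in> R21 \<Longrightarrow> c * k = 0"
      using k by (auto simp: Ann11_def)
    have "r * k = p11 r * k"
      using peirce_decomp[of r] mult_R12_R11_zero[OF p12_in_R12 k11] ck[OF p21_in_R21]
        mult_R22_R11_zero[OF p22_in_R22 k11]
      by (metis add.right_neutral distrib_right)
    moreover have "k * r = k * p11 r"
      using peirce_decomp[of r] kc[OF p12_in_R12] mult_R11_R21_zero[OF k11 p21_in_R21]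
        mult_R11_R22_zero[OF k11 p22_in_R22]
      by (metis add.right_neutral distrib_left)
    ultimately show ?thesis using Ann11_mult_R11[OF k p11_in_R11] by simp
  qed
  thus ?thesis by (auto simp: ring_ideal_def Ann11_def)
qed

lemma ring_ideal_Ann22: "ring_ideal Ann22"
proof -
  have "r * k \<in> Ann22 \<and> k * r \<in> Ann22" if k: "k \<in> Ann22" for k r
  proof -
    have k22: "k \<in> R22"
      and ck: "\<And>c. c \<in> R12 \<Longrightarrow> c * k = 0"
      and kc: "\<And>c. c \<in> R21 \<Longrightarrow> k * c = 0"
      using k by (auto simp: Ann22_def)
    have "r * k = p22 r * k"
      using peirce_decomp[of r] mult_R11_R22_zero[OF p11_in_R11 k22] ck[OF p12_in_R12]
        mult_R21_R22_zero[OF p21_in_R21 k22]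
      by (metis add_0 distrib_right)
    moreover have "k * r = k * p22 r"
      using peirce_decomp[of r] mult_R22_R11_zero[OF k22 p11_in_R11]
        mult_R22_R12_zero[OF k22 p12_in_R12] kc[OF p21_in_R21]
      by (metis add_0 distrib_left)
    ultimately show ?thesis using Ann22_mult_R22[OF k p22_in_R22] by simp
  qed
  thus ?thesis by (auto simp: ring_ideal_def Ann22_def)
qed

lemma Ann11_eq_zero:
  assumes "prime_ring R" and "\<not> (\<forall>x. e * x = x \<and> x * e = x)" and "k \<in> Ann11"
  shows "k = 0"
proof -
  obtain x where "x \<notin> R11" using assms(2) by auto
  define j where "j = p12 x + p21 x + p22 x"
  have "j \<noteq> 0"
    using \<open>x \<notin> R11\<close> p11_in_R11[of x] peirce_decomp[of x] by (auto simp: j_def add.assoc)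
  moreover have "k' * j = 0 \<and> j * k' = 0" if "k' \<in> Ann11" for k'
  proof -
    have "k' \<in> R11" "k' * p12 x = 0" "p21 x * k' = 0"
      using that p12_in_R12[of x] p21_in_R21[of x] unfolding Ann11_def by blast+
    thus ?thesis
      using mult_R12_R11_zero[OF p12_in_R12] mult_R22_R11_zero[OF p22_in_R22]
        mult_R11_R21_zero[OF _ p21_in_R21] mult_R11_R22_zero[OF _ p22_in_R22]
      by (simp add: j_def)
  qed
  hence "j \<in> annihilator Ann11" by (simp add: annihilator_def)
  ultimately show ?thesis
    using ideal_zero_of_nonzero_annihilator[OF assms(1) ring_ideal_Ann11] assms(3) by blast
qed

lemma Ann22_eq_zero:
  assumes "prime_ring R" and "e \<noteq> 0" and "k \<in> Ann22"
  shows "k = 0"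
proof -
  have "e \<in> annihilator Ann22" by (auto simp: annihilator_def Ann22_def)
  thus ?thesis
    using ideal_zero_of_nonzero_annihilator[OF assms(1) ring_ideal_Ann22] assms(2,3) by blast
qed

end

locale lie_3_derivation = nonassociative_ring R for R :: "'a::{ab_group_add,times} itself" +
  fixes D :: "'a \<Rightarrow> 'a"
  assumes lie_3: "mult_lie_3_derivation D"
begin

lemma D_commutator2:
  "D (commutator (commutator x y) w) =
     commutator (commutator (D x) y) w + commutator (commutator x (D y)) w
     + commutator (commutator x y) (D w)"
  using lie_3 by (simp add: mult_lie_3_derivation_def)

lemma D_zero [simp]: "D 0 = 0"
  using D_commutator2[of 0 0 0] by simp

definition defect :: "'a \<Rightarrow> 'a \<Rightarrow> 'a" where "defect u v = D (u + v) - D u - D v"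

lemma defect_zero [simp]: "defect 0 v = 0" "defect v 0 = 0"
  by (simp_all add: defect_def)

lemma defect_eq_0_iff: "defect u v = 0 \<longleftrightarrow> D (u + v) = D u + D v"
  by (auto simp: defect_def diff_eq_eq)

lemma defect_commute: "defect u v = defect v u"
  by (simp add: defect_def add.commute)

lemma commutator2_defect_left:
  "commutator (commutator (defect u v) x) y =
     defect (commutator (commutator u x) y) (commutator (commutator v x) y)"
  using D_commutator2[of "u + v" x y] D_commutator2[of u x y] D_commutator2[of v x y]
  by (simp add: defect_def algebra_simps)

lemma commutator2_defect_right:
  "commutator (commutator x y) (defect u v) =
     defect (commutator (commutator x y) u) (commutator (commutator x y) v)"
  using D_commutator2[of x y "u + v"] D_commutator2[of x y u] D_commutator2[of x y v]
  by (simp add: defect_def algebra_simps)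

lemma D_commutator2_expand:
  assumes "commutator (commutator (defect x1 x2) (y1 + y2)) w = 0"
    and "commutator (commutator (x1 + x2) (defect y1 y2)) w = 0"
  shows "D (commutator (commutator (x1 + x2) (y1 + y2)) w) =
    D (commutator (commutator x1 y1) w) + D (commutator (commutator x1 y2) w)
    + D (commutator (commutator x2 y1) w) + D (commutator (commutator x2 y2) w)"
  using assms D_commutator2[of "x1 + x2" "y1 + y2" w] D_commutator2[of x1 y1 w]
    D_commutator2[of x1 y2 w] D_commutator2[of x2 y1 w] D_commutator2[of x2 y2 w]
  by (simp add: defect_def algebra_simps)

end

locale lie_3_derivation_peirce =
  lie_3_derivation R D + peirce_decomposition R e
  for R :: "'a::{ab_group_add,times} itself" and D e
begin

lemma defect_e_diagonal: "defect e b \<in> diagonal"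
  by (simp add: diagonal_iff commutator2_defect_left)

\<comment> \<open>The second hypothesis says [[defect e b, c], e] = 0, and the off-diagonal element
   [defect e b, c] is determined by its commutator with e.\<close>
lemma commutator_defect_e_zero:
  assumes "c \<in> R12 \<or> c \<in> R21"
    and "defect (commutator (commutator e c) e) (commutator (commutator b c) e) = 0"
  shows "commutator (defect e b) c = 0"
proof -
  let ?k = "commutator (defect e b) c"
  have "commutator ?k e = 0" using assms(2) by (simp add: commutator2_defect_left)
  moreover have "?k \<in> R12 \<or> ?k \<in> R21"
    using assms(1) commutator_diagonal_R12 commutator_diagonal_R21 defect_e_diagonal by blast
  ultimately show ?thesis using commutator_e_R12 commutator_e_R21 by force
qed

lemma commutator_defect_e_R12_R21: "b \<in> R12 \<Longrightarrow> c \<in> R21 \<Longrightarrow> commutator (defect e b) c = 0"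
  and commutator_defect_e_R21_R12: "b \<in> R21 \<Longrightarrow> c \<in> R12 \<Longrightarrow> commutator (defect e b) c = 0"
  using commutator_defect_e_zero diagonal_commutator_e
    commutator_R12_R21_diagonal commutator_R21_R12_diagonal
  by simp_all

\<comment> \<open>The argument of D on the left is [[e + p, e + q], e]; the hypotheses make the defect terms
   of its bilinear expansion vanish.\<close>
lemma D_commutator2_e_expand:
  assumes "commutator (defect e p) q = 0" and "commutator (defect e q) p = 0"
  shows "D (commutator (commutator e q) e + commutator (commutator p e) e
      + commutator (commutator p q) e) =
    D (commutator (commutator e q) e) + D (commutator (commutator p e) e)
    + D (commutator (commutator p q) e)"
proof -
  have "commutator (commutator (defect e p) (e + q)) e = 0"
    using assms(1) diagonal_commutator_e[OF defect_e_diagonal] by simp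
  moreover have "commutator (commutator (e + p) (defect e q)) e = 0"
    using assms(2) commutator_e_diagonal[OF defect_e_diagonal] commutator_swap[of p "defect e q"]
    by simp
  ultimately have "D (commutator (commutator (e + p) (e + q)) e) =
    D (commutator (commutator e e) e) + D (commutator (commutator e q) e)
    + D (commutator (commutator p e) e) + D (commutator (commutator p q) e)"
    by (rule D_commutator2_expand)
  thus ?thesis by (simp add: ac_simps)
qed

lemma defect_R12_R21:
  assumes "a \<in> R12" "b \<in> R21"
  shows "defect a b = 0"
proof -
  have "- b \<in> R21" using assms(2) by simp
  have "commutator (commutator e (- b)) e = b" "commutator (commutator a e) e = a"
    using commutator_e_R12[OF assms(1)] commutator_e_R21[OF assms(2)] by simp_all
  moreover have "commutator (commutator a (- b)) e = 0"
    using diagonal_commutator_e[OF commutator_R12_R21_diagonal[OF assms(1) \<open>- b \<in> R21\<close>]] .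
  moreover note D_commutator2_e_expand[of a "- b"]
  ultimately have "D (b + a + 0) = D b + D a + D 0"
    using assms \<open>- b \<in> R21\<close> commutator_defect_e_R12_R21 commutator_defect_e_R21_R12
    by metis
  thus ?thesis by (simp add: defect_def add.commute)
qed

lemma commutator_defect_e_R12_R12:
  assumes "b \<in> R12" "c \<in> R12"
  shows "commutator (defect e b) c = 0"
proof (rule commutator_defect_e_zero)
  have "commutator (commutator e c) e = - c" "commutator (commutator b c) e = commutator b c"
    using commutator_e_R12[OF assms(2)] commutator_e_R21[OF commutator_R12_R12[OF assms]]
    by simp_all
  thus "defect (commutator (commutator e c) e) (commutator (commutator b c) e) = 0"
    using defect_R12_R21[OF _ commutator_R12_R12[OF assms]] assms(2) by simp
qed (use assms in simp)

lemma commutator_defect_e_R21_R21: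
  assumes "b \<in> R21" "c \<in> R21"
  shows "commutator (defect e b) c = 0"
proof (rule commutator_defect_e_zero)
  have "commutator (commutator e c) e = - c" "commutator (commutator b c) e = - commutator b c"
    using commutator_e_R21[OF assms(2)] commutator_e_R12[OF commutator_R21_R21[OF assms]]
    by simp_all
  thus "defect (commutator (commutator e c) e) (commutator (commutator b c) e) = 0"
    using defect_R12_R21[of "- commutator b c" "- c"] commutator_R21_R21[OF assms] assms(2)
    by (simp add: defect_commute[of "- c"])
qed (use assms in simp)

lemma defect_R12_R12:
  assumes "p \<in> R12" "q \<in> R12"
  shows "defect p q = 0"
proof -
  define r where "r = commutator p (- q)"
  have "- q \<in> R12" using assms(2) by simp
  hence "r \<in> R21" unfolding r_def by (rule commutator_R12_R12[OF assms(1)])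
  have "commutator (commutator e (- q)) e = q" "commutator (commutator p e) e = p"
    "commutator (commutator p (- q)) e = r"
    using commutator_e_R12[OF \<open>- q \<in> R12\<close>] commutator_e_R12[OF assms(1)]
      commutator_e_R21[OF \<open>r \<in> R21\<close>]
    by (simp_all add: r_def)
  moreover note D_commutator2_e_expand[of p "- q"]
  ultimately have "D (q + p + r) = D q + D p + D r"
    using assms \<open>- q \<in> R12\<close> commutator_defect_e_R12_R12 by metis
  moreover have "D (q + p + r) = D (q + p) + D r"
    using defect_R12_R21[of "q + p" r] assms \<open>r \<in> R21\<close> by (simp add: defect_eq_0_iff)
  ultimately show ?thesis by (simp add: defect_eq_0_iff add.commute)
qed

lemma defect_R21_R21:
  assumes "p \<in> R21" "q \<in> R21"
  shows "defect p q = 0"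
proof -
  define r where "r = commutator p (- q)"
  have "- q \<in> R21" using assms(2) by simp
  hence "r \<in> R12" unfolding r_def by (rule commutator_R21_R21[OF assms(1)])
  have "commutator (commutator e (- q)) e = q" "commutator (commutator p e) e = p"
    "commutator (commutator p (- q)) e = - r"
    using commutator_e_R21[OF \<open>- q \<in> R21\<close>] commutator_e_R21[OF assms(1)]
      commutator_e_R12[OF \<open>r \<in> R12\<close>]
    by (simp_all add: r_def)
  moreover note D_commutator2_e_expand[of p "- q"]
  ultimately have "D (q + p + - r) = D q + D p + D (- r)"
    using assms \<open>- q \<in> R21\<close> commutator_defect_e_R21_R21 by metis
  moreover have "D (q + p + - r) = D (q + p) + D (- r)"
    using defect_R12_R21[of "- r" "q + p"] assms \<open>r \<in> R12\<close>
    by (simp add: defect_eq_0_iff add.commute)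
  ultimately show ?thesis by (simp add: defect_eq_0_iff add.commute)
qed

lemma defect_off_diagonal: "defect (p12 u + p21 u) (p12 v + p21 v) = 0"
proof -
  have "D ((p12 u + p21 u) + (p12 v + p21 v)) = D ((p12 u + p12 v) + (p21 u + p21 v))"
    by (simp add: ac_simps)
  also have "\<dots> = D (p12 u + p12 v) + D (p21 u + p21 v)"
    using defect_R12_R21[of "p12 u + p12 v" "p21 u + p21 v"] p12_in_R12 p21_in_R21
    by (simp add: defect_eq_0_iff)
  also have "\<dots> = D (p12 u) + D (p12 v) + (D (p21 u) + D (p21 v))"
    using defect_R12_R12[OF p12_in_R12 p12_in_R12, of u v]
      defect_R21_R21[OF p21_in_R21 p21_in_R21, of u v]
    by (simp add: defect_eq_0_iff)
  finally show ?thesis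
    using defect_R12_R21[OF p12_in_R12 p21_in_R21, of u u]
      defect_R12_R21[OF p12_in_R12 p21_in_R21, of v v]
    by (simp add: defect_eq_0_iff ac_simps)
qed

lemma defect_diagonal: "defect u v \<in> diagonal"
  unfolding diagonal_iff commutator2_defect_left by (simp add: commutator2_e defect_off_diagonal)

lemma commutator_R12_defect:
  assumes "c \<in> R12"
  shows "commutator c (defect u v) = 0"
proof -
  have "commutator c (defect u v) \<in> diagonal"
    using commutator2_defect_right[of e c u v] commutator_e_R12[OF assms] defect_diagonal by simp
  moreover have "commutator c (defect u v) \<in> R12"
    using commutator_diagonal_R12[OF defect_diagonal assms] commutator_swap[of c "defect u v"]
    by simp
  ultimately show ?thesis using R12_diagonal_zero by blast
qed

lemma commutator_R21_defect:
  assumes "c \<in> R21"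
  shows "commutator c (defect u v) = 0"
proof -
  have "commutator c (defect u v) \<in> diagonal"
    using commutator2_defect_right[of c e u v] commutator_e_R21[OF assms] defect_diagonal by simp
  moreover have "commutator c (defect u v) \<in> R21"
    using commutator_diagonal_R21[OF defect_diagonal assms] commutator_swap[of c "defect u v"]
    by simp
  ultimately show ?thesis using R21_diagonal_zero by blast
qed

lemma commutator_defect_R11:
  assumes "x \<in> R11"
  shows "commutator (defect u v) x \<in> Ann11"
proof -
  define k where "k = commutator (defect u v) x"
  have k: "k \<in> R11" unfolding k_def by (rule commutator_diagonal_R11[OF defect_diagonal assms])
  have kc: "commutator k c \<in> diagonal" for c
    unfolding k_def commutator2_defect_left by (rule defect_diagonal)
  have "k * c = 0" if "c \<in> R12" for c
    using kc[of c] mult_R12_R11_zero[OF that k] mult_R11_R12[OF k that] R12_diagonal_zero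
    by (simp add: commutator_def)
  moreover have "c * k = 0" if "c \<in> R21" for c
    using kc[of c] mult_R11_R21_zero[OF k that] mult_R21_R11[OF that k] R21_diagonal_zero
      diagonal_minus[of "- (c * k)"]
    by (simp add: commutator_def)
  ultimately show ?thesis using k by (simp add: Ann11_def k_def)
qed

lemma commutator_defect_R22:
  assumes "x \<in> R22"
  shows "commutator (defect u v) x \<in> Ann22"
proof -
  define k where "k = commutator (defect u v) x"
  have k: "k \<in> R22" unfolding k_def by (rule commutator_diagonal_R22[OF defect_diagonal assms])
  have kc: "commutator k c \<in> diagonal" for c
    unfolding k_def commutator2_defect_left by (rule defect_diagonal)
  have "c * k = 0" if "c \<in> R12" for c
    using kc[of c] mult_R22_R12_zero[OF k that] mult_R12_R22[OF that k] R12_diagonal_zero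
      diagonal_minus[of "- (c * k)"]
    by (simp add: commutator_def)
  moreover have "k * c = 0" if "c \<in> R21" for c
    using kc[of c] mult_R21_R22_zero[OF that k] mult_R22_R21[OF k that] R21_diagonal_zero
    by (simp add: commutator_def)
  ultimately show ?thesis using k by (simp add: Ann22_def k_def)
qed

lemma defect_in_center:
  assumes "prime_ring R" "e \<noteq> 0" "\<not> (\<forall>x. e * x = x \<and> x * e = x)"
  shows "defect u v \<in> center"
proof -
  have "commutator (defect u v) x = 0" for x
  proof -
    have "commutator (defect u v) (p12 x) = 0" "commutator (defect u v) (p21 x) = 0"
      using commutator_R12_defect[OF p12_in_R12] commutator_R21_defect[OF p21_in_R21]
        commutator_swap[of "defect u v"]
      by simp_all
    moreover have "commutator (defect u v) (p11 x) = 0"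
      using Ann11_eq_zero[OF assms(1,3) commutator_defect_R11[OF p11_in_R11]] .
    moreover have "commutator (defect u v) (p22 x) = 0"
      using Ann22_eq_zero[OF assms(1,2) commutator_defect_R22[OF p22_in_R22]] .
    ultimately show ?thesis by (subst peirce_decomp[of x]) simp
  qed
  thus ?thesis by (simp add: center_def)
qed

end

theorem corollary2p8:
  fixes e1 :: "'a::{ab_group_add,times}" and D :: "'a \<Rightarrow> 'a"
  assumes "nonassoc_ring TYPE('a)"
    and "alternative TYPE('a)"
    and "three_torsion_free TYPE('a)"
    and "prime_ring TYPE('a)"
    and "e1 \<noteq> 0" and "e1 * e1 = e1"
    and "\<not> (\<forall>x. e1 * x = x \<and> x * e1 = x)"
    and "mult_lie_3_derivation D"
  shows "\<forall>a b. D (a + b) - D a - D b \<in> center"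
proof -
  interpret lie_3_derivation_peirce "TYPE('a)" D e1
    by unfold_locales (fact assms)+
  show ?thesis
    using defect_in_center[OF assms(4,5,7)] by (simp add: defect_def)
qed

end
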